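(* Let $r\geq 2$ be an integer, and let $G$ be a $K_{r+1}$-free finite simple graph of order $n$ without isolated vertices. If $c=\lceil(\delta(G)+1)/2\rceil$, then $$\gamma_{st}(G)\geq \frac{r}{r-1}\left(-(c-1)+\sqrt{(c-1)^2+4\,\frac{r-1}{r}\,c\,n}\right)-n.$$
   Context: A graph is $K_p$-free if it does not contain the complete graph $K_p$ as a subgraph. $\delta(G)$ is the minimum degree. For a vertex $v$, $N(v)$ is its open neighborhood. A signed total dominating function (STDF) of $G$ is a function $f:V(G)\to\{-1,1\}$ such that $\sum_{u\in N(v)}f(u)\geq 1$ for every vertex $v$; the signed total domination number $\gamma_{st}(G)$ is the minimum of $\sum_{v\in V(G)}f(v)$ over all STDFs $f$ of $G$. *)

theory Defs
  imports Complex_Main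
begin

definition simple_graph :: "'a set \<Rightarrow> ('a \<Rightarrow> 'a \<Rightarrow> bool) \<Rightarrow> bool" where
  "simple_graph V E \<longleftrightarrow> finite V \<and> (\<forall>u v. E u v \<longrightarrow> u \<in> V \<and> v \<in> V)
     \<and> (\<forall>u v. E u v \<longrightarrow> E v u) \<and> (\<forall>v. \<not> E v v)"

definition nbhd :: "'a set \<Rightarrow> ('a \<Rightarrow> 'a \<Rightarrow> bool) \<Rightarrow> 'a \<Rightarrow> 'a set" where
  "nbhd V E v = {u \<in> V. E v u}"

definition degree :: "'a set \<Rightarrow> ('a \<Rightarrow> 'a \<Rightarrow> bool) \<Rightarrow> 'a \<Rightarrow> nat" where
  "degree V E v = card (nbhd V E v)"

definition min_degree :: "'a set \<Rightarrow> ('a \<Rightarrow> 'a \<Rightarrow> bool) \<Rightarrow> nat" where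
  "min_degree V E = Min (degree V E ` V)"

definition no_isolated :: "'a set \<Rightarrow> ('a \<Rightarrow> 'a \<Rightarrow> bool) \<Rightarrow> bool" where
  "no_isolated V E \<longleftrightarrow> (\<forall>v\<in>V. nbhd V E v \<noteq> {})"

definition K_free :: "nat \<Rightarrow> 'a set \<Rightarrow> ('a \<Rightarrow> 'a \<Rightarrow> bool) \<Rightarrow> bool" where
  "K_free p V E \<longleftrightarrow> \<not> (\<exists>S. S \<subseteq> V \<and> card S = p \<and> (\<forall>u\<in>S. \<forall>v\<in>S. u \<noteq> v \<longrightarrow> E u v))"

definition is_STDF :: "'a set \<Rightarrow> ('a \<Rightarrow> 'a \<Rightarrow> bool) \<Rightarrow> ('a \<Rightarrow> int) \<Rightarrow> bool" where
  "is_STDF V E f \<longleftrightarrow> (\<forall>v\<in>V. f v = -1 \<or> f v = 1) \<and> (\<forall>v. v \<notin> V \<longrightarrow> f v = 0)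
     \<and> (\<forall>v\<in>V. (\<Sum>u\<in>nbhd V E v. f u) \<ge> 1)"

definition gamma_st :: "'a set \<Rightarrow> ('a \<Rightarrow> 'a \<Rightarrow> bool) \<Rightarrow> int" where
  "gamma_st V E = Min {(\<Sum>v\<in>V. f v) | f. is_STDF V E f}"

end

theory Submission imports Defs begin

text \<open>Take a minimum STDF \<open>f\<close> with positive vertices \<open>P\<close> and negative vertices \<open>M\<close>, so that
  \<open>\<gamma>\<^sub>s\<^sub>t = |P| - |M|\<close> and \<open>n = |P| + |M|\<close>. Every vertex has more neighbours in \<open>P\<close> than in
  \<open>M\<close>; hence each vertex of \<open>M\<close> has at least \<open>c\<close> neighbours in \<open>P\<close>, and counting the \<open>P\<close>--\<open>M\<close>
  edges from both sides gives \<open>c|M| + |P| \<le> 2e(G[P])\<close>. Since \<open>G[P]\<close> is \<open>K\<^sub>r\<^sub>+\<^sub>1\<close>-free,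
  Turan's theorem gives \<open>2e(G[P]) \<le> (r-1)/r \<cdot> |P|\<^sup>2\<close>. The resulting quadratic inequality
  in \<open>|P|\<close> is solved for \<open>|P|\<close> in terms of \<open>n\<close>.\<close>

lemma nbhd_Un: "nbhd (A \<union> B) E v = nbhd A E v \<union> nbhd B E v"
  unfolding nbhd_def by auto

lemma degree_Un:
  assumes "finite A" "finite B" "A \<inter> B = {}"
  shows "degree (A \<union> B) E v = degree A E v + degree B E v"
  unfolding degree_def nbhd_Un
  by (rule card_Un_disjoint) (use assms in \<open>auto simp: nbhd_def\<close>)

lemma degree_le_card: "finite S \<Longrightarrow> degree S E v \<le> card S"
  unfolding degree_def nbhd_def by (simp add: card_mono)

lemma sum_degree_swap:
  assumes "finite A" "finite B" and sym: "\<And>u w. E u w \<Longrightarrow> E w u"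
  shows "(\<Sum>u\<in>A. degree B E u) = (\<Sum>w\<in>B. degree A E w)"
proof -
  have "\<forall>w\<in>B. card {u\<in>A. E u w} = degree A E w"
    unfolding degree_def nbhd_def using sym by (metis (no_types, lifting) Collect_cong)
  from sum_multicount_gen[OF assms(1,2) this] show ?thesis
    unfolding degree_def nbhd_def .
qed

lemma K_free_subset: "K_free p V E \<Longrightarrow> S \<subseteq> V \<Longrightarrow> K_free p S E"
  unfolding K_free_def by blast

lemma K_free_1_iff_empty: "K_free 1 S E \<longleftrightarrow> S = {}"
proof
  assume free: "K_free 1 S E"
  show "S = {}"
  proof (rule ccontr)
    assume "S \<noteq> {}"
    then obtain v where "{v} \<subseteq> S" by blast
    moreover have "card {v} = 1 \<and> (\<forall>u\<in>{v}. \<forall>w\<in>{v}. u \<noteq> w \<longrightarrow> E u w)" by simp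
    ultimately show False using free unfolding K_free_def by blast
  qed
qed (simp add: K_free_def)

lemma K_free_nbhd:
  assumes "K_free (Suc p) S E" "finite S" "v \<in> S"
    and irrefl: "\<And>v. \<not> E v v" and sym: "\<And>u w. E u w \<Longrightarrow> E w u"
  shows "K_free p (nbhd S E v) E"
  unfolding K_free_def
proof
  assume "\<exists>T. T \<subseteq> nbhd S E v \<and> card T = p \<and> (\<forall>u\<in>T. \<forall>w\<in>T. u \<noteq> w \<longrightarrow> E u w)"
  then obtain T where T: "T \<subseteq> nbhd S E v" "card T = p" "\<forall>u\<in>T. \<forall>w\<in>T. u \<noteq> w \<longrightarrow> E u w"
    by blast
  have "T \<subseteq> S" "v \<notin> T" using T(1) irrefl unfolding nbhd_def by auto
  then have "insert v T \<subseteq> S" "card (insert v T) = Suc p"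
    using T(2) \<open>v \<in> S\<close> \<open>finite S\<close> by (auto dest: finite_subset)
  moreover have "\<forall>u\<in>insert v T. \<forall>w\<in>insert v T. u \<noteq> w \<longrightarrow> E u w"
    using T(1,3) sym unfolding nbhd_def by auto
  ultimately show False using assms(1) unfolding K_free_def by blast
qed

text \<open>Splitting off the neighbourhood \<open>A\<close> of a vertex of maximum degree \<open>\<Delta> = |A|\<close>: every edge
  not inside \<open>A\<close> has an end in \<open>S - A\<close>, and these ends have degree at most \<open>\<Delta>\<close>.\<close>

lemma sum_degree_le_max_degree_nbhd:
  assumes "finite S" "v \<in> S" and max: "\<And>w. w \<in> S \<Longrightarrow> degree S E w \<le> degree S E v"
    and sym: "\<And>u w. E u w \<Longrightarrow> E w u"
  defines "A \<equiv> nbhd S E v"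
  shows "(\<Sum>w\<in>S. degree S E w) \<le> (\<Sum>w\<in>A. degree A E w) + 2 * (card S - card A) * card A"
proof -
  define B where "B = S - A"
  have "A \<subseteq> S" unfolding A_def nbhd_def by auto
  then have S: "S = A \<union> B" "A \<inter> B = {}" and fin: "finite A" "finite B"
    unfolding B_def using \<open>finite S\<close> finite_subset by auto
  have cardB: "card B = card S - card A" unfolding B_def using \<open>A \<subseteq> S\<close> fin by (simp add: card_Diff_subset)
  have \<Delta>: "degree S E v = card A" unfolding A_def degree_def ..
  have sumB: "(\<Sum>w\<in>B. degree S E w) \<le> card B * card A"
    using sum_bounded_above[of B "degree S E" "card A"] max \<Delta> S(1) by auto
  have "(\<Sum>w\<in>S. degree S E w) = (\<Sum>w\<in>A. degree S E w) + (\<Sum>w\<in>B. degree S E w)"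
    using S fin by (simp add: sum.union_disjoint)
  moreover have "(\<Sum>w\<in>A. degree S E w) = (\<Sum>w\<in>A. degree A E w) + (\<Sum>w\<in>A. degree B E w)"
    unfolding S(1) using S(2) fin by (simp add: degree_Un sum.distrib)
  moreover have "(\<Sum>w\<in>A. degree B E w) = (\<Sum>w\<in>B. degree A E w)"
    using sum_degree_swap[OF fin] sym by blast
  moreover have "(\<Sum>w\<in>B. degree A E w) \<le> (\<Sum>w\<in>B. degree S E w)"
    unfolding S(1) using S(2) fin by (intro sum_mono) (simp add: degree_Un)
  moreover have "2 * (card S - card A) * card A = card B * card A + card B * card A"
    using cardB by simp
  ultimately show ?thesis using sumB by linarith
qed

lemma turan_step_arith:
  fixes R X DA D p :: int
  assumes R: "R \<ge> 0" and DA_sq: "DA \<le> D^2" and IH: "R * DA \<le> (R - 1) * D^2"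
    and X: "X \<le> DA + 2 * (p - D) * D"
  shows "(R + 1) * X \<le> R * p^2"
proof (cases "R = 0")
  case True
  then have "D = 0" using IH by simp
  then show ?thesis using True X DA_sq by simp
next
  case False
  then have R1: "R \<ge> 1" using R by simp
  have "R * ((R + 1) * X) \<le> (R + 1) * (R * DA) + 2 * R * (R + 1) * (p - D) * D"
    using mult_left_mono[OF X, of "R * (R + 1)"] R by (simp add: algebra_simps)
  also have "\<dots> \<le> (R + 1) * ((R - 1) * D^2) + 2 * R * (R + 1) * (p - D) * D"
    using IH R by simp
  also have "\<dots> = R * (R * p^2) - (R * p - (R + 1) * D)^2"
    by (simp add: algebra_simps power2_eq_square)
  also have "\<dots> \<le> R * (R * p^2)" by simp
  finally show ?thesis using R1 by simp
qed

theorem turan_sum_degree: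
  assumes "K_free (r + 1) S E" "finite S"
    and irrefl: "\<And>v. \<not> E v v" and sym: "\<And>u w. E u w \<Longrightarrow> E w u"
  shows "int r * (\<Sum>v\<in>S. int (degree S E v)) \<le> (int r - 1) * int (card S)^2"
  using assms(1,2)
proof (induction r arbitrary: S)
  case 0
  then show ?case using K_free_1_iff_empty[of S E] by simp
next
  case (Suc r)
  show ?case
  proof (cases "S = {}")
    case True
    then show ?thesis by simp
  next
    case False
    have "Max (degree S E ` S) \<in> degree S E ` S" using Suc.prems(2) False by simp
    then obtain v where v: "v \<in> S" and "degree S E v = Max (degree S E ` S)" by auto
    then have max: "\<And>w. w \<in> S \<Longrightarrow> degree S E w \<le> degree S E v"
      using Suc.prems(2) by simp
    define A where "A = nbhd S E v"
    have finA: "finite A" unfolding A_def nbhd_def using Suc.prems(2) by simp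
    have "K_free (Suc (r + 1)) S E" using Suc.prems(1) by simp
    from K_free_nbhd[OF this Suc.prems(2) v irrefl sym] have "K_free (r + 1) A E"
      unfolding A_def .
    from Suc.IH[OF this finA]
    have IH: "int r * (\<Sum>w\<in>A. int (degree A E w)) \<le> (int r - 1) * int (card A)^2" .
    have A_le: "card A \<le> card S" unfolding A_def nbhd_def using Suc.prems(2) by (simp add: card_mono)
    have "(\<Sum>w\<in>A. degree A E w) \<le> card A * card A"
      using sum_bounded_above[of A "degree A E" "card A"] degree_le_card[OF finA] by simp
    then have DA_sq: "(\<Sum>w\<in>A. int (degree A E w)) \<le> int (card A)^2"
      by (simp add: power2_eq_square flip: of_nat_sum of_nat_mult)
    have "(\<Sum>w\<in>S. degree S E w) \<le> (\<Sum>w\<in>A. degree A E w) + 2 * (card S - card A) * card A"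
      unfolding A_def by (rule sum_degree_le_max_degree_nbhd[OF Suc.prems(2) v max sym])
    then have "int (\<Sum>w\<in>S. degree S E w)
        \<le> int ((\<Sum>w\<in>A. degree A E w) + 2 * (card S - card A) * card A)"
      by (rule of_nat_mono)
    then have "(\<Sum>w\<in>S. int (degree S E w))
        \<le> (\<Sum>w\<in>A. int (degree A E w)) + 2 * (int (card S) - int (card A)) * int (card A)"
      using A_le by (simp add: of_nat_diff)
    from turan_step_arith[OF _ DA_sq IH this] show ?thesis by (simp add: add.commute)
  qed
qed

lemma sum_plus_minus_one:
  fixes f :: "'a \<Rightarrow> int"
  assumes "finite X" "\<And>v. v \<in> X \<Longrightarrow> f v = -1 \<or> f v = 1"
  shows "(\<Sum>v\<in>X. f v) = int (card {v\<in>X. f v = 1}) - int (card {v\<in>X. f v = -1})"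
    and "card X = card {v\<in>X. f v = 1} + card {v\<in>X. f v = -1}"
proof -
  have X: "X = {v\<in>X. f v = 1} \<union> {v\<in>X. f v = -1}" using assms(2) by auto
  have "(\<Sum>v\<in>X. f v) = (\<Sum>v\<in>{v\<in>X. f v = 1}. f v) + (\<Sum>v\<in>{v\<in>X. f v = -1}. f v)"
    by (subst X, rule sum.union_disjoint) (use assms(1) in auto)
  then show "(\<Sum>v\<in>X. f v) = int (card {v\<in>X. f v = 1}) - int (card {v\<in>X. f v = -1})"
    by simp
  show "card X = card {v\<in>X. f v = 1} + card {v\<in>X. f v = -1}"
    by (subst X, rule card_Un_disjoint) (use assms(1) in auto)
qed

lemma gamma_st_attained:
  assumes "simple_graph V E" "no_isolated V E"
  obtains f where "is_STDF V E f" "gamma_st V E = (\<Sum>v\<in>V. f v)"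
proof -
  have finV: "finite V" using assms(1) unfolding simple_graph_def by simp
  define F where "F = {(\<Sum>v\<in>V. f v) | f. is_STDF V E f}"
  have "is_STDF V E (\<lambda>v. if v \<in> V then 1 else 0)"
    unfolding is_STDF_def
  proof (intro conjI ballI allI impI)
    fix v assume "v \<in> V"
    then have "nbhd V E v \<noteq> {}" using assms(2) unfolding no_isolated_def by auto
    moreover have "finite (nbhd V E v)" "nbhd V E v \<subseteq> V" using finV unfolding nbhd_def by auto
    ultimately show "(\<Sum>u\<in>nbhd V E v. if u \<in> V then 1 else 0) \<ge> (1::int)"
      by (simp add: subset_iff Suc_le_eq card_gt_0_iff)
  qed auto
  then have "F \<noteq> {}" unfolding F_def by auto
  have "F \<subseteq> {- int (card V) .. int (card V)}"
  proof
    fix x assume "x \<in> F"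
    then obtain f where f: "is_STDF V E f" "x = (\<Sum>v\<in>V. f v)" unfolding F_def by auto
    then have "\<bar>f v\<bar> = 1" if "v \<in> V" for v using that unfolding is_STDF_def by force
    then have "\<bar>x\<bar> \<le> int (card V)"
      using sum_abs[of f V] f(2) by simp
    then show "x \<in> {- int (card V) .. int (card V)}" by (simp add: abs_le_iff)
  qed
  then have "finite F" by (rule finite_subset) simp
  with \<open>F \<noteq> {}\<close> have "gamma_st V E \<in> F" unfolding gamma_st_def F_def[symmetric] by simp
  then show ?thesis using that unfolding F_def by auto
qed

lemma STDF_degree_split:
  assumes "is_STDF V E f" "finite V" "v \<in> V"
  defines "P \<equiv> {u\<in>V. f u = 1}" and "M \<equiv> {u\<in>V. f u = -1}"
  shows "degree V E v = degree P E v + degree M E v" and "degree M E v < degree P E v"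
proof -
  have pm: "\<And>u. u \<in> nbhd V E v \<Longrightarrow> f u = -1 \<or> f u = 1"
    using assms(1) unfolding is_STDF_def nbhd_def by auto
  have fin: "finite (nbhd V E v)" using assms(2) unfolding nbhd_def by simp
  have P: "{u\<in>nbhd V E v. f u = 1} = nbhd P E v" and M: "{u\<in>nbhd V E v. f u = -1} = nbhd M E v"
    unfolding P_def M_def nbhd_def by auto
  show "degree V E v = degree P E v + degree M E v"
    using sum_plus_minus_one(2)[of _ f, OF fin pm] unfolding degree_def P M .
  have "(\<Sum>u\<in>nbhd V E v. f u) \<ge> 1" using assms(1,3) unfolding is_STDF_def by blast
  then show "degree M E v < degree P E v"
    using sum_plus_minus_one(1)[of _ f, OF fin pm] unfolding degree_def P M by simp
qed

lemma STDF_positive_degree_sum: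
  assumes "simple_graph V E" "is_STDF V E f"
  defines "P \<equiv> {u\<in>V. f u = 1}" and "M \<equiv> {u\<in>V. f u = -1}"
    and "c \<equiv> \<lceil>(real (min_degree V E) + 1) / 2\<rceil>"
  shows "c * int (card M) + int (card P) \<le> (\<Sum>v\<in>P. int (degree P E v))"
proof -
  have finV: "finite V" and sym: "\<And>u w. E u w \<Longrightarrow> E w u"
    using assms(1) unfolding simple_graph_def by auto
  have fin: "finite P" "finite M" using finV unfolding P_def M_def by auto
  note split = STDF_degree_split[OF assms(2) finV, folded P_def M_def]
  have "c \<le> int (degree P E v)" if "v \<in> M" for v
  proof -
    have v: "v \<in> V" using that unfolding M_def by simp
    have "min_degree V E \<le> degree V E v" unfolding min_degree_def using finV v by simp
    then have "real (min_degree V E) + 1 \<le> 2 * real (degree P E v)"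
      using split[OF v] by linarith
    then show ?thesis unfolding c_def by (simp add: ceiling_le_iff)
  qed
  then have "c * int (card M) \<le> (\<Sum>v\<in>M. int (degree P E v))"
    using sum_mono[of M "\<lambda>_. c"] by (simp add: mult.commute)
  also have "\<dots> = (\<Sum>u\<in>P. int (degree M E u))"
    using sum_degree_swap[OF fin(2,1)] sym by (simp flip: of_nat_sum)
  also have "\<dots> \<le> (\<Sum>u\<in>P. int (degree P E u) - 1)"
    using split unfolding P_def by (intro sum_mono) force
  finally show ?thesis by (simp add: sum_subtractf)
qed

lemma STDF_turan_inequality:
  assumes "simple_graph V E" "K_free (r + 1) V E" "is_STDF V E f"
  defines "P \<equiv> {u\<in>V. f u = 1}" and "M \<equiv> {u\<in>V. f u = -1}"
    and "c \<equiv> \<lceil>(real (min_degree V E) + 1) / 2\<rceil>"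
  shows "int r * (c * int (card M) + int (card P)) \<le> (int r - 1) * int (card P)^2"
proof -
  have "finite V" and irrefl: "\<And>v. \<not> E v v" and sym: "\<And>u w. E u w \<Longrightarrow> E w u"
    using assms(1) unfolding simple_graph_def by auto
  then have "int r * (\<Sum>v\<in>P. int (degree P E v)) \<le> (int r - 1) * int (card P)^2"
    using turan_sum_degree[OF K_free_subset[OF assms(2)] _ irrefl sym] unfolding P_def by simp
  moreover have "c * int (card M) + int (card P) \<le> (\<Sum>v\<in>P. int (degree P E v))"
    using STDF_positive_degree_sum[OF assms(1,3)] unfolding P_def M_def c_def .
  ultimately show ?thesis by (meson mult_left_mono of_nat_0_le_iff order_trans)
qed

lemma quadratic_lower_bound:
  fixes p m c r :: real
  assumes r: "r > 1" and c: "c \<ge> 1" and p: "p \<ge> 0"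
    and quadratic: "r * (c * m + p) \<le> (r - 1) * p^2"
  shows "p - m \<ge> r / (r - 1) * (- (c - 1) + sqrt ((c - 1)^2 + 4 * ((r - 1) / r) * c * (p + m)))
    - (p + m)"
proof -
  define X where "X = (c - 1)^2 + 4 * ((r - 1) / r) * c * (p + m)"
  define Y where "Y = 2 * p * (r - 1) / r + (c - 1)"
  have "Y^2 - X = 4 * (r - 1) / r^2 * ((r - 1) * p^2 - r * (c * m + p))"
    unfolding X_def Y_def using r by (simp add: field_simps power2_eq_square)
  also have "\<dots> \<ge> 0" using quadratic r by simp
  finally have "sqrt X \<le> Y"
    using real_sqrt_le_mono[of X "Y^2"] r c p unfolding Y_def by simp
  then have "r / (r - 1) * (- (c - 1) + sqrt X) \<le> r / (r - 1) * (- (c - 1) + Y)"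
    using r by (intro mult_left_mono) auto
  also have "\<dots> = 2 * p" unfolding Y_def using r by (simp add: field_simps)
  finally show ?thesis unfolding X_def by simp
qed

theorem theorem3p7:
  fixes V :: "'a set" and E :: "'a \<Rightarrow> 'a \<Rightarrow> bool" and r :: nat
  assumes "r \<ge> 2"
    and "simple_graph V E"
    and "K_free (r + 1) V E"
    and "no_isolated V E"
  shows "let n = real (card V);
             c = real_of_int \<lceil>(real (min_degree V E) + 1) / 2\<rceil>
         in real_of_int (gamma_st V E) \<ge>
              real r / (real r - 1) *
                (- (c - 1) + sqrt ((c - 1)^2 + 4 * ((real r - 1) / real r) * c * n)) - n"
proof -
  have finV: "finite V" using assms(2) unfolding simple_graph_def by simp
  obtain f where f: "is_STDF V E f" and gamma: "gamma_st V E = (\<Sum>v\<in>V. f v)"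
    using gamma_st_attained[OF assms(2,4)] .
  define P where "P = {u\<in>V. f u = 1}"
  define M where "M = {u\<in>V. f u = -1}"
  define c where "c = \<lceil>(real (min_degree V E) + 1) / 2\<rceil>"
  have "real_of_int (int r * (c * int (card M) + int (card P)))
      \<le> real_of_int ((int r - 1) * int (card P)^2)"
    using STDF_turan_inequality[OF assms(2,3) f] unfolding P_def M_def c_def
    by (simp only: of_int_le_iff)
  moreover have "c \<ge> 1" unfolding c_def by (simp add: le_ceiling_iff add_pos_pos)
  ultimately have "real (card P) - real (card M) \<ge> real r / (real r - 1) * (- (real_of_int c - 1)
      + sqrt ((real_of_int c - 1)^2 + 4 * ((real r - 1) / real r) * real_of_int c
        * (real (card P) + real (card M))))
      - (real (card P) + real (card M))"
    using assms(1) by (intro quadratic_lower_bound) auto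
  moreover have "\<And>v. v \<in> V \<Longrightarrow> f v = -1 \<or> f v = 1" using f unfolding is_STDF_def by blast
  then have "gamma_st V E = int (card P) - int (card M)" "card V = card P + card M"
    using gamma sum_plus_minus_one[of V f, OF finV] unfolding P_def M_def by simp_all
  ultimately show ?thesis unfolding Let_def c_def[symmetric] by simp
qed

end
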